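(* Consider the disclosure model described in the context (emission space $E=[0,\bar e]$, type space $\Theta=[\underline\theta,\bar\theta]$, profit function $\tilde\pi$ satisfying the standing assumptions, and $\pi(\theta,e)=\tilde\pi(\theta,e,e)$). An emission scheme $\mathbf{e}:\Theta\to E$ is implementable if and only if \[\pi(\theta,\mathbf{e}(\theta))\ge \pi(\theta,\mathbf{e}(\theta'))\quad\text{for all }\theta,\theta'\in\Theta,\] and \[\pi(\theta,\mathbf{e}(\theta))\ge \pi(\theta,\bar e)\quad\text{for all }\theta\in\Theta.\]
   Context: Emissions lie in $E=[0,\bar e]\subset\mathbb{R}_+$ with $\bar e>0$. The firm's type $\theta$ lies in $\Theta=[\underline\theta,\bar\theta]\subset\mathbb{R}$ and has a density $f=F'$ that is continuous on $\Theta$. The firm's profit is $\tilde\pi(\theta,e,\tilde e)$, where $e$ is the actual emission and $\tilde e\in E$ the emission perceived by the market. For each $\theta$, $\tilde\pi$ is strictly increasing in $e$ and strictly decreasing in $\tilde e$. Standing assumptions: $\tilde\pi$ is continuous on $\Theta\times E\times E$ and twice continuously differentiable on its interior; $\pi(\theta,e):=\tilde\pi(\theta,e,e)$ is strictly concave in $e$ on $E$ for each $\theta$; and $\pi(\theta,0)<\pi(\theta,\bar e)$ for all $\theta$. A disclosure policy is a function $d:E\to E$; it represents the partition of $E$ into the level sets of $d$, and the market observes $d(e)$. An emission level $e\in E$ is belief-compatible under $d$ if $e\ge e'$ for every $e'\in E$ with $d(e')=d(e)$. Let $\tilde E_d$ denote the set of belief-compatible emission levels. In equilibrium, the market believes that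 the firm chose the highest emission consistent with what is disclosed, so the firm of type $\theta$ effectively solves $\max_{e\in\tilde E_d}\pi(\theta,e)$. Let $\mathcal{D}$ denote the set of disclosure policies $d$ for which this maximum is attained for every $\theta\in\Theta$. An emission scheme $\mathbf{e}:\Theta\to E$ is implementable if there exists $d\in\mathcal{D}$ such that for every $\theta\in\Theta$, $\mathbf{e}(\theta)$ is belief-compatible under $d$ and maximizes $\pi(\theta,\cdot)$ over $\tilde E_d$. *)

theory Defs
  imports "HOL-Analysis.Analysis"
begin

definition strictly_concave_on :: "real set \<Rightarrow> (real \<Rightarrow> real) \<Rightarrow> bool" where
  "strictly_concave_on S g \<longleftrightarrow> convex S \<and>
     (\<forall>x\<in>S. \<forall>y\<in>S. \<forall>t. x \<noteq> y \<and> 0 < t \<and> t < 1 \<longrightarrow>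
        g (t * x + (1 - t) * y) > t * g x + (1 - t) * g y)"

definition C2_on :: "('a::euclidean_space) set \<Rightarrow> ('a \<Rightarrow> real) \<Rightarrow> bool" where
  "C2_on S g \<longleftrightarrow> (\<exists>g' :: 'a \<Rightarrow> ('a \<Rightarrow>\<^sub>L real). \<exists>g'' :: 'a \<Rightarrow> ('a \<Rightarrow>\<^sub>L ('a \<Rightarrow>\<^sub>L real)).
      (\<forall>x\<in>S. (g has_derivative blinfun_apply (g' x)) (at x)) \<and>
      (\<forall>x\<in>S. (g' has_derivative blinfun_apply (g'' x)) (at x)) \<and>
      continuous_on S g'')"

definition belief_compatible :: "real set \<Rightarrow> (real \<Rightarrow> real) \<Rightarrow> real \<Rightarrow> bool" where
  "belief_compatible E d e \<longleftrightarrow> e \<in> E \<and> (\<forall>e'\<in>E. d e' = d e \<longrightarrow> e' \<le> e)"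

definition Etilde :: "real set \<Rightarrow> (real \<Rightarrow> real) \<Rightarrow> real set" where
  "Etilde E d = {e. belief_compatible E d e}"

definition in_D :: "real set \<Rightarrow> real set \<Rightarrow> (real \<Rightarrow> real \<Rightarrow> real) \<Rightarrow> (real \<Rightarrow> real) \<Rightarrow> bool" where
  "in_D E \<Theta> \<pi> d \<longleftrightarrow> (\<forall>e\<in>E. d e \<in> E) \<and>
     (\<forall>\<theta>\<in>\<Theta>. \<exists>e\<in>Etilde E d. \<forall>e'\<in>Etilde E d. \<pi> \<theta> e' \<le> \<pi> \<theta> e)"

definition implementable ::
  "real set \<Rightarrow> real set \<Rightarrow> (real \<Rightarrow> real \<Rightarrow> real) \<Rightarrow> (real \<Rightarrow> real) \<Rightarrow> bool" where
  "implementable E \<Theta> \<pi> es \<longleftrightarrow> (\<exists>d. in_D E \<Theta> \<pi> d \<and>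
     (\<forall>\<theta>\<in>\<Theta>. belief_compatible E d (es \<theta>) \<and>
        (\<forall>e'\<in>Etilde E d. \<pi> \<theta> e' \<le> \<pi> \<theta> (es \<theta>))))"

end

theory Submission
  imports Defs
begin

text \<open>Every type may mimic any other type's belief-compatible emission, and the highest
  emission level is belief-compatible under every disclosure policy; this gives necessity.
  Conversely, the policy that discloses the scheme's emission levels exactly and pools every
  other level with the highest one makes precisely these levels belief-compatible, so under
  the two conditions each type's scheme emission is optimal.\<close>

definition pooling_policy :: "real set \<Rightarrow> real \<Rightarrow> real \<Rightarrow> real" where
  "pooling_policy S m = (\<lambda>e. if e \<in> S then e else m)"

lemma belief_compatible_greatest:
  assumes "m \<in> E" and "\<And>x. x \<in> E \<Longrightarrow> x \<le> m"
  shows "belief_compatible E d m"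
  using assms unfolding belief_compatible_def by blast

lemma Etilde_pooling_policy:
  assumes "S \<subseteq> E" and "m \<in> S" and "\<And>x. x \<in> E \<Longrightarrow> x \<le> m"
  shows "Etilde E (pooling_policy S m) = S"
proof (intro set_eqI iffI)
  fix e
  assume "e \<in> Etilde E (pooling_policy S m)"
  then have "e \<in> E" and below: "\<And>e'. e' \<in> E \<Longrightarrow> pooling_policy S m e' = pooling_policy S m e \<Longrightarrow> e' \<le> e"
    unfolding Etilde_def belief_compatible_def by auto
  show "e \<in> S"
  proof (rule ccontr)
    assume "e \<notin> S"
    then have "m \<le> e"
      using below[of m] assms by (auto simp: pooling_policy_def)
    with \<open>e \<in> E\<close> assms(3) have "e = m"
      by (simp add: order_antisym)
    with \<open>e \<notin> S\<close> \<open>m \<in> S\<close> show False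
      by simp
  qed
next
  fix e
  assume "e \<in> S"
  with assms show "e \<in> Etilde E (pooling_policy S m)"
    unfolding Etilde_def belief_compatible_def pooling_policy_def by (auto split: if_splits)
qed

lemma implementable_iff_incentive_compatible:
  assumes m_greatest: "m \<in> E" "\<And>x. x \<in> E \<Longrightarrow> x \<le> m"
    and scheme: "\<And>\<theta>. \<theta> \<in> \<Theta> \<Longrightarrow> es \<theta> \<in> E"
  shows "implementable E \<Theta> \<pi> es \<longleftrightarrow>
           (\<forall>\<theta>\<in>\<Theta>. \<forall>\<theta>'\<in>\<Theta>. \<pi> \<theta> (es \<theta>') \<le> \<pi> \<theta> (es \<theta>)) \<and>
           (\<forall>\<theta>\<in>\<Theta>. \<pi> \<theta> m \<le> \<pi> \<theta> (es \<theta>))"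
proof
  assume "implementable E \<Theta> \<pi> es"
  then obtain d where
    "\<forall>\<theta>\<in>\<Theta>. belief_compatible E d (es \<theta>) \<and> (\<forall>e'\<in>Etilde E d. \<pi> \<theta> e' \<le> \<pi> \<theta> (es \<theta>))"
    unfolding implementable_def by blast
  moreover have "m \<in> Etilde E d"
    using belief_compatible_greatest[OF m_greatest] by (simp add: Etilde_def)
  ultimately show "(\<forall>\<theta>\<in>\<Theta>. \<forall>\<theta>'\<in>\<Theta>. \<pi> \<theta> (es \<theta>') \<le> \<pi> \<theta> (es \<theta>)) \<and>
      (\<forall>\<theta>\<in>\<Theta>. \<pi> \<theta> m \<le> \<pi> \<theta> (es \<theta>))"
    unfolding Etilde_def by auto
next
  assume ic: "(\<forall>\<theta>\<in>\<Theta>. \<forall>\<theta>'\<in>\<Theta>. \<pi> \<theta> (es \<theta>') \<le> \<pi> \<theta> (es \<theta>)) \<and>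
      (\<forall>\<theta>\<in>\<Theta>. \<pi> \<theta> m \<le> \<pi> \<theta> (es \<theta>))"
  define S where "S = insert m (es ` \<Theta>)"
  define d where "d = pooling_policy S m"
  have Etilde_d: "Etilde E d = S"
    unfolding d_def using scheme m_greatest by (intro Etilde_pooling_policy) (auto simp: S_def)
  have optimal: "\<forall>e'\<in>Etilde E d. \<pi> \<theta> e' \<le> \<pi> \<theta> (es \<theta>)" if "\<theta> \<in> \<Theta>" for \<theta>
    using ic that by (auto simp: Etilde_d S_def)
  have compatible: "belief_compatible E d (es \<theta>)" if "\<theta> \<in> \<Theta>" for \<theta>
    using Etilde_d that by (auto simp: S_def Etilde_def)
  have "\<forall>e\<in>E. d e \<in> E"
    using scheme m_greatest by (auto simp: d_def pooling_policy_def S_def)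
  moreover have "\<exists>e\<in>Etilde E d. \<forall>e'\<in>Etilde E d. \<pi> \<theta> e' \<le> \<pi> \<theta> e" if "\<theta> \<in> \<Theta>" for \<theta>
    using optimal[OF that] compatible[OF that] by (auto simp: Etilde_def)
  ultimately have "in_D E \<Theta> \<pi> d"
    unfolding in_D_def by blast
  with optimal compatible show "implementable E \<Theta> \<pi> es"
    unfolding implementable_def by blast
qed

theorem lemma1:
  fixes ebar \<theta>l \<theta>h :: real
    and f :: "real \<Rightarrow> real"
    and \<pi>t :: "real \<Rightarrow> real \<Rightarrow> real \<Rightarrow> real"
    and es :: "real \<Rightarrow> real"
  defines "E \<equiv> {0..ebar}"
    and "\<Theta> \<equiv> {\<theta>l..\<theta>h}"
    and "\<pi> \<equiv> (\<lambda>\<theta> e. \<pi>t \<theta> e e)"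
  assumes ebar_pos: "ebar > 0"
    and f_cont: "continuous_on \<Theta> f"
    and incr: "\<And>\<theta> et. \<theta> \<in> \<Theta> \<Longrightarrow> et \<in> E \<Longrightarrow> strict_mono_on E (\<lambda>e. \<pi>t \<theta> e et)"
    and decr: "\<And>\<theta> e. \<theta> \<in> \<Theta> \<Longrightarrow> e \<in> E \<Longrightarrow> strict_antimono_on E (\<lambda>et. \<pi>t \<theta> e et)"
    and cont: "continuous_on (\<Theta> \<times> E \<times> E) (\<lambda>(\<theta>, e, et). \<pi>t \<theta> e et)"
    and C2: "C2_on (interior (\<Theta> \<times> E \<times> E)) (\<lambda>(\<theta>, e, et). \<pi>t \<theta> e et)"
    and conc: "\<And>\<theta>. \<theta> \<in> \<Theta> \<Longrightarrow> strictly_concave_on E (\<pi> \<theta>)"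
    and top: "\<And>\<theta>. \<theta> \<in> \<Theta> \<Longrightarrow> \<pi> \<theta> 0 < \<pi> \<theta> ebar"
    and scheme: "\<And>\<theta>. \<theta> \<in> \<Theta> \<Longrightarrow> es \<theta> \<in> E"
  shows "implementable E \<Theta> \<pi> es \<longleftrightarrow>
           (\<forall>\<theta>\<in>\<Theta>. \<forall>\<theta>'\<in>\<Theta>. \<pi> \<theta> (es \<theta>) \<ge> \<pi> \<theta> (es \<theta>')) \<and>
           (\<forall>\<theta>\<in>\<Theta>. \<pi> \<theta> (es \<theta>) \<ge> \<pi> \<theta> ebar)"
proof -
  have "ebar \<in> E" "\<And>x. x \<in> E \<Longrightarrow> x \<le> ebar"
    using ebar_pos by (auto simp: E_def)
  then show ?thesis
    using scheme by (rule implementable_iff_incentive_compatible)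
qed

end
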